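(* Let $(\Delta,U,\mu_\Delta)$ be an expanding Young tower with $\mu_\Delta(\Delta_n)\le C\rho^n$. There exists $C>0$ such that for every finite $F\subset\mathbb N$ and all positive integers $(n_i)_{i\in F}$, $$\mu_\Delta\big(\{x\in\Delta_0:\forall i\in F,\ \phi(U_0^ix)=n_i\}\big)\le\prod_{i\in F}(C\rho^{n_i}).$$
   Context: Expanding Young tower: probability space $(\Delta,\mu_\Delta)$, measure-preserving $U$, partition $\{\Delta_{k,p}\}_{0\le k<r_p}$ with $U:\Delta_{k,p}\to\Delta_{k+1,p}$ and $U:\Delta_{r_p-1,p}\to\Delta_0=\bigcup_m\Delta_{0,m}$ measurable isomorphisms, and bounded distortion $|1-J(x)/J(y)|\le C\beta^{s(Ux,Uy)}$ for the inverse Jacobian $J$ of $U$ and $x,y$ in a common partition element ($s$ the separation time counted in returns to the basis). $\Delta_n=\bigcup_p\Delta_{n,p}$. $\phi$ is the first return time to $\Delta_0$ and $U_0=U^\phi$ the induced map on $\Delta_0$. *)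

theory Defs
  imports "HOL-Probability.Probability"
begin

text \<open>Tower data: probability measure M on 'a, map U, index set P of basis elements,
  heights r p, sets D k p for the element of level k above basis element p,
  inverse Jacobian J.\<close>

definition base :: "nat set \<Rightarrow> (nat \<Rightarrow> nat \<Rightarrow> 'a set) \<Rightarrow> 'a set" where
  "base P D = (\<Union>p\<in>P. D 0 p)"

definition level :: "nat set \<Rightarrow> (nat \<Rightarrow> nat) \<Rightarrow> (nat \<Rightarrow> nat \<Rightarrow> 'a set) \<Rightarrow> nat \<Rightarrow> 'a set" where
  "level P r D n = (\<Union>p\<in>{p\<in>P. n < r p}. D n p)"

definition same_elt :: "nat set \<Rightarrow> (nat \<Rightarrow> nat) \<Rightarrow> (nat \<Rightarrow> nat \<Rightarrow> 'a set) \<Rightarrow> 'a \<Rightarrow> 'a \<Rightarrow> bool" where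
  "same_elt P r D x y = (\<exists>p\<in>P. \<exists>k<r p. x \<in> D k p \<and> y \<in> D k p)"

text \<open>Separation time, counted in returns to the basis: the number of times j < N
  with U^j x in the basis, where N is the first time U^j x and U^j y lie in different
  partition elements (infinite if there is no such time).\<close>
definition sep :: "nat set \<Rightarrow> (nat \<Rightarrow> nat) \<Rightarrow> (nat \<Rightarrow> nat \<Rightarrow> 'a set) \<Rightarrow> ('a \<Rightarrow> 'a) \<Rightarrow> 'a \<Rightarrow> 'a \<Rightarrow> enat" where
  "sep P r D U x y =
     (if \<forall>j. same_elt P r D ((U ^^ j) x) ((U ^^ j) y) then \<infinity>
      else enat (card {j. j < (LEAST j. \<not> same_elt P r D ((U ^^ j) x) ((U ^^ j) y))
                          \<and> (U ^^ j) x \<in> base P D}))"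

definition epow :: "real \<Rightarrow> enat \<Rightarrow> real" where
  "epow b s = (case s of enat n \<Rightarrow> b ^ n | \<infinity> \<Rightarrow> 0)"

definition young_tower ::
  "'a measure \<Rightarrow> ('a \<Rightarrow> 'a) \<Rightarrow> nat set \<Rightarrow> (nat \<Rightarrow> nat) \<Rightarrow> (nat \<Rightarrow> nat \<Rightarrow> 'a set) \<Rightarrow> ('a \<Rightarrow> real) \<Rightarrow> bool" where
  "young_tower M U P r D J \<longleftrightarrow>
     prob_space M \<and>
     U \<in> measurable M M \<and> distr M M U = M \<and>
     (\<forall>p\<in>P. 1 \<le> r p) \<and>
     (\<forall>p\<in>P. \<forall>k<r p. D k p \<in> sets M) \<and>
     (\<forall>x\<in>space M. \<exists>!(k, p). p \<in> P \<and> k < r p \<and> x \<in> D k p) \<and>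
     (\<forall>p\<in>P. \<forall>k. Suc k < r p \<longrightarrow> bij_betw U (D k p) (D (Suc k) p)) \<and>
     (\<forall>p\<in>P. bij_betw U (D (r p - 1) p) (base P D)) \<and>
     (\<forall>p\<in>P. \<forall>k<r p. \<forall>A\<in>sets M. A \<subseteq> D k p \<longrightarrow> U ` A \<in> sets M) \<and>
     J \<in> borel_measurable M \<and> (\<forall>x\<in>space M. 0 < J x) \<and>
     (\<forall>p\<in>P. \<forall>k<r p. \<forall>A\<in>sets M. A \<subseteq> D k p \<longrightarrow>
         emeasure M (U ` A) = (\<integral>\<^sup>+ x\<in>A. ennreal (1 / J x) \<partial>M)) \<and>
     (\<exists>C \<beta>. 0 < \<beta> \<and> \<beta> < 1 \<and>
        (\<forall>p\<in>P. \<forall>k<r p. \<forall>x\<in>D k p. \<forall>y\<in>D k p.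
            \<bar>1 - J x / J y\<bar> \<le> C * epow \<beta> (sep P r D U (U x) (U y))))"

definition ret_time :: "('a \<Rightarrow> 'a) \<Rightarrow> 'a set \<Rightarrow> 'a \<Rightarrow> nat" where
  "ret_time U B x = (LEAST n. 0 < n \<and> (U ^^ n) x \<in> B)"

definition induced :: "('a \<Rightarrow> 'a) \<Rightarrow> 'a set \<Rightarrow> 'a \<Rightarrow> 'a" where
  "induced U B x = (U ^^ ret_time U B x) x"

end

theory Submission
  imports Defs
begin

(* Cylinders {x \<in> Delta_0. \<forall>i\<in>F. phi (U_0^i x) = n_i} are peeled one return at a time.
   For measurable E \<subseteq> Delta_0, the points of the basis element D 0 p that U_0 sends into E
   are the preimage under U^(r p - 1) of T \<inter> U^-1 E, where T = D (r p - 1) p is the top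
   floor of the column over p; by invariance their measure is mu (T \<inter> U^-1 E).
   U maps T bijectively onto Delta_0 with Jacobian of bounded distortion, whence
   mu (T \<inter> U^-1 E) mu Delta_0 \<le> (1 + c) mu T mu E. Summing over the columns of height n
   gives mu {phi = n, U_0 \<in> E} \<le> (1 + c) mu E mu Delta_(n-1) / mu Delta_0 \<le> K rho^n mu E
   with K = (1 + c) C0 / (rho mu Delta_0), while without a constraint on phi invariance alone
   gives mu {U_0 \<in> E} = mu E. *)

lemma measurable_funpow: "T \<in> measurable M M \<Longrightarrow> T ^^ n \<in> measurable M M"
  by (induction n) (auto intro: measurable_compose)

lemma distr_funpow_eq:
  assumes T: "T \<in> measurable M M" and invariant: "distr M M T = M"
  shows "distr M M (T ^^ n) = M"
proof (induction n)
  case 0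
  show ?case by (simp add: id_def)
next
  case (Suc n)
  have "distr M M (T ^^ Suc n) = distr (distr M M T) M (T ^^ n)"
    by (simp only: funpow_Suc_right distr_distr[OF measurable_funpow[OF T] T])
  also have "\<dots> = M"
    using invariant Suc.IH by simp
  finally show ?case .
qed

lemma emeasure_funpow_vimage:
  assumes "T \<in> measurable M M" "distr M M T = M" "X \<in> sets M"
  shows "emeasure M ((T ^^ n) -` X \<inter> space M) = emeasure M X"
  using emeasure_distr[OF measurable_funpow assms(3), of T] distr_funpow_eq[OF assms(1,2)] assms(1)
  by simp

lemma set_nn_integral_distortion_le:
  fixes h :: "'a \<Rightarrow> real"
  assumes [measurable]: "A \<in> sets M" "G \<in> sets M" "h \<in> borel_measurable M"
    and "G \<subseteq> A" and pos: "\<And>x. x \<in> A \<Longrightarrow> 0 < h x"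
    and distortion: "\<And>x y. x \<in> A \<Longrightarrow> y \<in> A \<Longrightarrow> h x \<le> K * h y"
  shows "emeasure M G * (\<integral>\<^sup>+x\<in>A. h x \<partial>M) \<le> ennreal K * emeasure M A * (\<integral>\<^sup>+x\<in>G. h x \<partial>M)"
proof -
  have integral_A_le: "(\<integral>\<^sup>+x\<in>A. h x \<partial>M) \<le> ennreal K * emeasure M A * h y" if "y \<in> A" for y
  proof -
    have "0 \<le> K" using distortion[OF that that] pos[OF that] by (simp add: zero_le_mult_iff)
    have "(\<integral>\<^sup>+x\<in>A. h x \<partial>M) \<le> (\<integral>\<^sup>+x. ennreal (K * h y) * indicator A x \<partial>M)"
      by (intro nn_integral_mono) (simp add: distortion that ennreal_leI split: split_indicator)
    also have "\<dots> = ennreal (K * h y) * emeasure M A"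
      by (rule nn_integral_cmult_indicator) fact
    also have "\<dots> = ennreal K * emeasure M A * h y"
      using \<open>0 \<le> K\<close> pos[OF that] by (simp add: ennreal_mult ac_simps)
    finally show ?thesis .
  qed
  have "emeasure M G * (\<integral>\<^sup>+x\<in>A. h x \<partial>M) = (\<integral>\<^sup>+x\<in>G. (\<integral>\<^sup>+x\<in>A. h x \<partial>M) \<partial>M)"
    unfolding nn_integral_cmult_indicator[OF \<open>G \<in> sets M\<close>] by (rule mult.commute)
  also have "\<dots> \<le> (\<integral>\<^sup>+x\<in>G. ennreal K * emeasure M A * h x \<partial>M)"
    using \<open>G \<subseteq> A\<close> integral_A_le
    by (intro nn_integral_mono) (auto split: split_indicator)
  also have "\<dots> = ennreal K * emeasure M A * (\<integral>\<^sup>+x\<in>G. h x \<partial>M)"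
    by (subst nn_integral_cmult[symmetric]) (auto simp: ac_simps)
  finally show ?thesis .
qed

definition return_cylinder :: "('a \<Rightarrow> 'a) \<Rightarrow> 'a set \<Rightarrow> nat set \<Rightarrow> (nat \<Rightarrow> nat) \<Rightarrow> 'a set" where
  "return_cylinder U B F ns = {x \<in> B. \<forall>i\<in>F. ret_time U B ((induced U B ^^ i) x) = ns i}"

lemma return_cylinder_unfold:
  assumes "induced U B ` B \<subseteq> B"
  shows "return_cylinder U B F ns =
    {x \<in> B. (0 \<in> F \<longrightarrow> ret_time U B x = ns 0) \<and>
            induced U B x \<in> return_cylinder U B {i. Suc i \<in> F} (\<lambda>i. ns (Suc i))}"
proof -
  have split_zero: "(\<forall>i\<in>F. Q i) \<longleftrightarrow> (0 \<in> F \<longrightarrow> Q 0) \<and> (\<forall>i\<in>{i. Suc i \<in> F}. Q (Suc i))" for Q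
    by (metis mem_Collect_eq not0_implies_Suc)
  show ?thesis
    using assms unfolding return_cylinder_def split_zero
    by (auto simp: funpow_Suc_right simp del: funpow.simps(2))
qed

lemma prod_split_zero:
  fixes f :: "nat \<Rightarrow> 'b::comm_monoid_mult"
  assumes "finite F"
  shows "(\<Prod>i\<in>F. f i) = (if 0 \<in> F then f 0 else 1) * (\<Prod>i\<in>{i. Suc i \<in> F}. f (Suc i))"
proof -
  have "F - {0} = Suc ` {i. Suc i \<in> F}"
    by (auto simp: image_iff) (metis not0_implies_Suc)
  then have "(\<Prod>i\<in>F - {0}. f i) = (\<Prod>i\<in>{i. Suc i \<in> F}. f (Suc i))"
    by (simp add: prod.reindex)
  then show ?thesis
    using prod.remove[OF assms, of 0 f] by (cases "0 \<in> F") auto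
qed

locale young_tower_space =
  fixes M :: "'a measure" and U :: "'a \<Rightarrow> 'a" and P :: "nat set" and r :: "nat \<Rightarrow> nat"
    and D :: "nat \<Rightarrow> nat \<Rightarrow> 'a set" and J :: "'a \<Rightarrow> real"
  assumes young_tower: "young_tower M U P r D J"
begin

sublocale prob_space M
  using young_tower by (simp add: young_tower_def)

abbreviation "\<Delta>\<^sub>0 \<equiv> base P D"
abbreviation "\<phi> \<equiv> ret_time U \<Delta>\<^sub>0"
abbreviation "U\<^sub>0 \<equiv> induced U \<Delta>\<^sub>0"

lemma measurable_U: "U \<in> measurable M M"
  and distr_U: "distr M M U = M"
  and height_pos: "p \<in> P \<Longrightarrow> 0 < r p"
  and sets_D: "p \<in> P \<Longrightarrow> k < r p \<Longrightarrow> D k p \<in> sets M"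
  and tower_partition: "x \<in> space M \<Longrightarrow> \<exists>!(k, p). p \<in> P \<and> k < r p \<and> x \<in> D k p"
  and bij_betw_U_step: "p \<in> P \<Longrightarrow> Suc k < r p \<Longrightarrow> bij_betw U (D k p) (D (Suc k) p)"
  and bij_betw_U_top: "p \<in> P \<Longrightarrow> bij_betw U (D (r p - 1) p) \<Delta>\<^sub>0"
  and emeasure_U_image: "p \<in> P \<Longrightarrow> k < r p \<Longrightarrow> A \<in> sets M \<Longrightarrow> A \<subseteq> D k p \<Longrightarrow>
         emeasure M (U ` A) = (\<integral>\<^sup>+x\<in>A. ennreal (1 / J x) \<partial>M)"
  and J_pos: "x \<in> space M \<Longrightarrow> 0 < J x"
  and borel_measurable_J: "J \<in> borel_measurable M"
  using young_tower by (auto simp: young_tower_def Suc_le_eq)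

lemma D_subset_space: "p \<in> P \<Longrightarrow> k < r p \<Longrightarrow> D k p \<subseteq> space M"
  using sets_D by (rule sets.sets_into_space)

lemma bounded_distortion:
  obtains c where "0 \<le> c"
    "\<forall>p\<in>P. \<forall>k<r p. \<forall>x\<in>D k p. \<forall>y\<in>D k p. J x \<le> (1 + c) * J y"
proof -
  have "\<exists>C \<beta>. 0 < \<beta> \<and> \<beta> < 1 \<and> (\<forall>p\<in>P. \<forall>k<r p. \<forall>x\<in>D k p. \<forall>y\<in>D k p.
      \<bar>1 - J x / J y\<bar> \<le> C * epow \<beta> (sep P r D U (U x) (U y)))"
    using young_tower unfolding young_tower_def by (elim conjE) assumption
  then obtain C \<beta> where "0 < \<beta>" "\<beta> < 1" and distortion: "\<forall>p\<in>P. \<forall>k<r p. \<forall>x\<in>D k p. \<forall>y\<in>D k p.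
      \<bar>1 - J x / J y\<bar> \<le> C * epow \<beta> (sep P r D U (U x) (U y))"
    by blast
  have epow_le_1: "0 \<le> epow \<beta> s" "epow \<beta> s \<le> 1" for s
    using \<open>0 < \<beta>\<close> \<open>\<beta> < 1\<close> by (cases s; simp add: epow_def power_le_one)+
  have C_epow_le: "C * epow \<beta> s \<le> \<bar>C\<bar>" for s
  proof -
    have "C * epow \<beta> s \<le> \<bar>C\<bar> * epow \<beta> s"
      using epow_le_1 by (intro mult_right_mono) auto
    also have "\<dots> \<le> \<bar>C\<bar>"
      using epow_le_1 by (intro mult_left_le) auto
    finally show ?thesis .
  qed
  show thesis
  proof (rule that[of "\<bar>C\<bar>"])
    show "\<forall>p\<in>P. \<forall>k<r p. \<forall>x\<in>D k p. \<forall>y\<in>D k p. J x \<le> (1 + \<bar>C\<bar>) * J y"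
    proof (intro ballI allI impI)
      fix p k x y assume elt: "p \<in> P" "k < r p" "x \<in> D k p" "y \<in> D k p"
      have "\<bar>1 - J x / J y\<bar> \<le> \<bar>C\<bar>"
        using distortion elt C_epow_le order_trans by blast
      moreover have "0 < J y"
        using J_pos D_subset_space elt by blast
      ultimately show "J x \<le> (1 + \<bar>C\<bar>) * J y"
        by (simp add: abs_le_iff field_simps)
    qed
  qed simp
qed

lemma D_unique:
  assumes "p \<in> P" "k < r p" "q \<in> P" "j < r q" "x \<in> D k p" "x \<in> D j q"
  shows "k = j \<and> p = q"
  using tower_partition[of x] D_subset_space assms by blast

lemma D_cover:
  assumes "x \<in> space M"
  obtains p k where "p \<in> P" "k < r p" "x \<in> D k p"
  using tower_partition[OF assms] by auto

lemma U_mem_D_Suc: "p \<in> P \<Longrightarrow> Suc k < r p \<Longrightarrow> x \<in> D k p \<Longrightarrow> U x \<in> D (Suc k) p"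
  using bij_betwE[OF bij_betw_U_step] by blast

lemma U_top_mem_base: "p \<in> P \<Longrightarrow> x \<in> D (r p - 1) p \<Longrightarrow> U x \<in> \<Delta>\<^sub>0"
  using bij_betwE[OF bij_betw_U_top] by blast

lemma mem_base_iff: "x \<in> \<Delta>\<^sub>0 \<longleftrightarrow> (\<exists>p\<in>P. x \<in> D 0 p)"
  by (simp add: base_def)

lemma sets_base: "\<Delta>\<^sub>0 \<in> sets M"
  unfolding base_def using sets_D height_pos by blast

lemma funpow_mem_D: "p \<in> P \<Longrightarrow> x \<in> D 0 p \<Longrightarrow> k < r p \<Longrightarrow> (U ^^ k) x \<in> D k p"
  by (induction k) (auto intro: U_mem_D_Suc)

lemma funpow_height: "p \<in> P \<Longrightarrow> (U ^^ r p) x = U ((U ^^ (r p - 1)) x)"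
  using height_pos by (metis Suc_diff_1 comp_apply funpow.simps(2))

lemma funpow_height_mem_base:
  assumes "p \<in> P" "x \<in> D 0 p"
  shows "(U ^^ r p) x \<in> \<Delta>\<^sub>0"
  using funpow_mem_D[OF assms, of "r p - 1"] height_pos[OF assms(1)] U_top_mem_base[OF assms(1)]
  by (simp add: funpow_height[OF assms(1)])

lemma D_disjoint_base: "p \<in> P \<Longrightarrow> 0 < k \<Longrightarrow> k < r p \<Longrightarrow> y \<in> D k p \<Longrightarrow> y \<notin> \<Delta>\<^sub>0"
  unfolding base_def using D_unique height_pos by blast

lemma ret_time_eq_height:
  assumes "p \<in> P" "x \<in> D 0 p"
  shows "\<phi> x = r p"
  unfolding ret_time_def
proof (rule Least_equality)
  show "0 < r p \<and> (U ^^ r p) x \<in> \<Delta>\<^sub>0"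
    using assms height_pos funpow_height_mem_base by blast
  show "r p \<le> n" if "0 < n \<and> (U ^^ n) x \<in> \<Delta>\<^sub>0" for n
    using that assms funpow_mem_D D_disjoint_base by (meson not_le)
qed

lemma induced_eq: "p \<in> P \<Longrightarrow> x \<in> D 0 p \<Longrightarrow> U\<^sub>0 x = (U ^^ r p) x"
  by (simp add: induced_def ret_time_eq_height)

lemma induced_mem_base: "x \<in> \<Delta>\<^sub>0 \<Longrightarrow> U\<^sub>0 x \<in> \<Delta>\<^sub>0"
  using induced_eq funpow_height_mem_base by (auto simp: mem_base_iff)

lemma vimage_U_D:
  assumes "p \<in> P" "Suc k < r p"
  shows "U -` D (Suc k) p \<inter> space M = D k p"
proof
  show "D k p \<subseteq> U -` D (Suc k) p \<inter> space M"
    using assms D_subset_space U_mem_D_Suc by auto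
  show "U -` D (Suc k) p \<inter> space M \<subseteq> D k p"
  proof
    fix x assume x: "x \<in> U -` D (Suc k) p \<inter> space M"
    then obtain q j where q: "q \<in> P" "j < r q" "x \<in> D j q"
      by (auto elim: D_cover)
    show "x \<in> D k p"
    proof (cases "Suc j < r q")
      case True
      then have "Suc k = Suc j \<and> p = q"
        using x q assms D_unique[OF assms q(1) True] U_mem_D_Suc by blast
      then show ?thesis using q by simp
    next
      case False
      then have "j = r q - 1"
        using q(2) by simp
      then have "U x \<in> \<Delta>\<^sub>0"
        using U_top_mem_base[OF q(1)] q(3) by simp
      then show ?thesis
        using x assms D_disjoint_base by blast
    qed
  qed
qed

lemma vimage_funpow_D: "p \<in> P \<Longrightarrow> k < r p \<Longrightarrow> (U ^^ k) -` D k p \<inter> space M = D 0 p"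
proof (induction k)
  case 0
  then show ?case using D_subset_space by auto
next
  case (Suc k)
  have "(U ^^ Suc k) -` D (Suc k) p \<inter> space M = (U ^^ k) -` (U -` D (Suc k) p \<inter> space M) \<inter> space M"
    using measurable_space[OF measurable_funpow[OF measurable_U]] by auto
  also have "\<dots> = D 0 p"
    using Suc vimage_U_D by simp
  finally show ?case .
qed

definition top_floor :: "nat \<Rightarrow> 'a set" where
  "top_floor p = D (r p - 1) p"

lemma sets_top_floor: "p \<in> P \<Longrightarrow> top_floor p \<in> sets M"
  unfolding top_floor_def using sets_D height_pos by simp

lemma top_floor_subset_space: "p \<in> P \<Longrightarrow> top_floor p \<subseteq> space M"
  using sets_top_floor by (rule sets.sets_into_space)

lemma sets_top_floor_vimage:
  assumes "p \<in> P" "E \<in> sets M"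
  shows "top_floor p \<inter> U -` E \<in> sets M"
proof -
  have "top_floor p \<inter> U -` E = top_floor p \<inter> (U -` E \<inter> space M)"
    using top_floor_subset_space[OF assms(1)] by blast
  then show ?thesis
    using sets_top_floor[OF assms(1)] measurable_sets[OF measurable_U assms(2)] by simp
qed

lemma disjoint_family_top_floor: "disjoint_family_on top_floor P"
proof (unfold disjoint_family_on_def, intro ballI impI)
  fix p q assume pq: "p \<in> P" "q \<in> P" "p \<noteq> q"
  then have "r p - 1 < r p" "r q - 1 < r q"
    using height_pos by simp_all
  then show "top_floor p \<inter> top_floor q = {}"
    unfolding top_floor_def using D_unique pq by blast
qed

lemma image_U_top_floor: "p \<in> P \<Longrightarrow> U ` top_floor p = \<Delta>\<^sub>0"
  unfolding top_floor_def using bij_betw_U_top by (rule bij_betw_imp_surj_on)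

lemma vimage_U_base:
  assumes "E \<subseteq> \<Delta>\<^sub>0"
  shows "U -` E \<inter> space M = (\<Union>p\<in>P. top_floor p \<inter> U -` E)"
proof safe
  fix x assume x: "x \<in> space M" "U x \<in> E"
  then obtain q j where jq: "q \<in> P" "j < r q" "x \<in> D j q"
    by (auto elim: D_cover)
  have "j = r q - 1"
  proof (rule ccontr)
    assume "j \<noteq> r q - 1"
    then have "Suc j < r q" using jq by simp
    then show False
      using x assms D_disjoint_base[OF jq(1) _ \<open>Suc j < r q\<close>] U_mem_D_Suc[OF jq(1) _ jq(3)]
      by blast
  qed
  then show "x \<in> (\<Union>p\<in>P. top_floor p \<inter> U -` E)"
    using jq x unfolding top_floor_def by blast
qed (use top_floor_subset_space in auto)

lemma first_return_vimage_eq: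
  assumes "p \<in> P"
  shows "D 0 p \<inter> (U ^^ r p) -` E = (U ^^ (r p - 1)) -` (top_floor p \<inter> U -` E) \<inter> space M"
  using funpow_height[OF assms] vimage_funpow_D[OF assms, of "r p - 1"] height_pos[OF assms]
    D_subset_space[OF assms, of 0]
  unfolding top_floor_def by auto

lemma emeasure_first_return_vimage:
  assumes "p \<in> P" "E \<in> sets M"
  shows "D 0 p \<inter> (U ^^ r p) -` E \<in> sets M"
    and "emeasure M (D 0 p \<inter> (U ^^ r p) -` E) = emeasure M (top_floor p \<inter> U -` E)"
  unfolding first_return_vimage_eq[OF assms(1)]
  by (rule measurable_sets[OF measurable_funpow[OF measurable_U] sets_top_floor_vimage[OF assms]])
    (rule emeasure_funpow_vimage[OF measurable_U distr_U sets_top_floor_vimage[OF assms]])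

lemma induced_vimage_eq_Union:
  "{x \<in> \<Delta>\<^sub>0. Q (\<phi> x) \<and> U\<^sub>0 x \<in> E} = (\<Union>p\<in>{p \<in> P. Q (r p)}. D 0 p \<inter> (U ^^ r p) -` E)"
  using ret_time_eq_height induced_eq by (auto simp: mem_base_iff)

lemma emeasure_induced_vimage_split:
  assumes "E \<in> sets M"
  shows "{x \<in> \<Delta>\<^sub>0. Q (\<phi> x) \<and> U\<^sub>0 x \<in> E} \<in> sets M"
    and "emeasure M {x \<in> \<Delta>\<^sub>0. Q (\<phi> x) \<and> U\<^sub>0 x \<in> E} =
           (\<integral>\<^sup>+p. emeasure M (top_floor p \<inter> U -` E) \<partial>count_space {p \<in> P. Q (r p)})"
proof -
  have sets: "D 0 p \<inter> (U ^^ r p) -` E \<in> sets M" if "p \<in> {p \<in> P. Q (r p)}" for p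
    using that emeasure_first_return_vimage(1) assms by blast
  have disjoint: "disjoint_family_on (\<lambda>p. D 0 p \<inter> (U ^^ r p) -` E) {p \<in> P. Q (r p)}"
    unfolding disjoint_family_on_def using D_unique height_pos by blast
  show "{x \<in> \<Delta>\<^sub>0. Q (\<phi> x) \<and> U\<^sub>0 x \<in> E} \<in> sets M"
    unfolding induced_vimage_eq_Union using sets by (intro sets.countable_UN'') auto
  show "emeasure M {x \<in> \<Delta>\<^sub>0. Q (\<phi> x) \<and> U\<^sub>0 x \<in> E} =
      (\<integral>\<^sup>+p. emeasure M (top_floor p \<inter> U -` E) \<partial>count_space {p \<in> P. Q (r p)})"
  proof -
    have "emeasure M {x \<in> \<Delta>\<^sub>0. Q (\<phi> x) \<and> U\<^sub>0 x \<in> E} =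
        (\<integral>\<^sup>+p. emeasure M (D 0 p \<inter> (U ^^ r p) -` E) \<partial>count_space {p \<in> P. Q (r p)})"
      unfolding induced_vimage_eq_Union by (rule emeasure_UN_countable[OF sets countableI_type disjoint])
    also have "\<dots> = (\<integral>\<^sup>+p. emeasure M (top_floor p \<inter> U -` E) \<partial>count_space {p \<in> P. Q (r p)})"
      using assms by (intro nn_integral_cong) (auto simp: emeasure_first_return_vimage(2))
    finally show ?thesis .
  qed
qed

lemma emeasure_induced_vimage:
  assumes "E \<in> sets M" "E \<subseteq> \<Delta>\<^sub>0"
  shows "emeasure M {x \<in> \<Delta>\<^sub>0. U\<^sub>0 x \<in> E} = emeasure M E"
proof -
  have "emeasure M {x \<in> \<Delta>\<^sub>0. U\<^sub>0 x \<in> E} = (\<integral>\<^sup>+p. emeasure M (top_floor p \<inter> U -` E) \<partial>count_space P)"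
    using emeasure_induced_vimage_split(2)[OF assms(1), of "\<lambda>_. True"] by simp
  also have "\<dots> = emeasure M (\<Union>p\<in>P. top_floor p \<inter> U -` E)"
  proof -
    have "disjoint_family_on (\<lambda>p. top_floor p \<inter> U -` E) P"
      using disjoint_family_top_floor unfolding disjoint_family_on_def by blast
    then show ?thesis
      using sets_top_floor_vimage assms(1) by (intro emeasure_UN_countable[symmetric]) auto
  qed
  also have "\<dots> = emeasure M E"
    using vimage_U_base[OF assms(2)] emeasure_distr[OF measurable_U assms(1)] distr_U by simp
  finally show ?thesis .
qed

lemma sets_level: "level P r D n \<in> sets M"
  unfolding level_def using sets_D by (intro sets.countable_UN'') auto

lemma level_zero_eq_base: "level P r D 0 = \<Delta>\<^sub>0"
  unfolding level_def base_def using height_pos by auto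

lemma sets_return_cylinder: "finite F \<Longrightarrow> return_cylinder U \<Delta>\<^sub>0 F ns \<in> sets M"
proof -
  have "return_cylinder U \<Delta>\<^sub>0 F ns \<in> sets M" if "F \<subseteq> {..<m}" for m
    using that
  proof (induction m arbitrary: F ns)
    case 0
    then show ?case by (simp add: return_cylinder_def sets_base)
  next
    case (Suc m)
    then have "return_cylinder U \<Delta>\<^sub>0 {i. Suc i \<in> F} (\<lambda>i. ns (Suc i)) \<in> sets M"
      by (intro Suc.IH) auto
    then show ?case
      using induced_mem_base
      by (subst return_cylinder_unfold) (auto intro: emeasure_induced_vimage_split(1))
  qed
  then show "finite F \<Longrightarrow> ?thesis"
    using finite_nat_bounded by blast
qed

context
  fixes c :: real
  assumes c_nonneg: "0 \<le> c"
    and J_distortion: "\<forall>p\<in>P. \<forall>k<r p. \<forall>x\<in>D k p. \<forall>y\<in>D k p. J x \<le> (1 + c) * J y"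
begin

lemma emeasure_top_floor_vimage_le:
  assumes p: "p \<in> P" and E: "E \<in> sets M" "E \<subseteq> \<Delta>\<^sub>0"
  shows "emeasure M (top_floor p \<inter> U -` E) * emeasure M \<Delta>\<^sub>0 \<le>
    ennreal (1 + c) * emeasure M (top_floor p) * emeasure M E"
proof -
  let ?G = "top_floor p \<inter> U -` E"
  have top: "r p - 1 < r p" "top_floor p \<in> sets M" "?G \<in> sets M" "?G \<subseteq> top_floor p"
    using height_pos[OF p] sets_top_floor[OF p] sets_top_floor_vimage[OF p E(1)] by auto
  have "E \<subseteq> U ` ?G"
  proof
    fix e assume "e \<in> E"
    then obtain t where "t \<in> top_floor p" "e = U t"
      using image_U_top_floor[OF p] E(2) by (metis imageE subsetD)
    then show "e \<in> U ` ?G" using \<open>e \<in> E\<close> by blast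
  qed
  then have "U ` ?G = E" by blast
  then have emeasure_E: "emeasure M E = (\<integral>\<^sup>+x\<in>?G. ennreal (1 / J x) \<partial>M)"
    using emeasure_U_image[OF p top(1,3)] top(4) unfolding top_floor_def by simp
  have emeasure_base: "emeasure M \<Delta>\<^sub>0 = (\<integral>\<^sup>+x\<in>top_floor p. ennreal (1 / J x) \<partial>M)"
    using emeasure_U_image[OF p top(1,2)] image_U_top_floor[OF p] unfolding top_floor_def by simp
  have J_pos_top: "x \<in> top_floor p \<Longrightarrow> 0 < J x" for x
    using J_pos top_floor_subset_space[OF p] by blast
  have "1 / J x \<le> (1 + c) * (1 / J y)" if "x \<in> top_floor p" "y \<in> top_floor p" for x y
  proof -
    have "J y \<le> (1 + c) * J x"
      using J_distortion p top(1) that unfolding top_floor_def by blast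
    then show ?thesis
      using J_pos_top that by (simp add: divide_le_eq field_simps)
  qed
  then show ?thesis
    unfolding emeasure_E emeasure_base using top J_pos_top
    by (intro set_nn_integral_distortion_le) (auto intro: borel_measurable_divide borel_measurable_J)
qed

lemma emeasure_return_time_le:
  assumes E: "E \<in> sets M" "E \<subseteq> \<Delta>\<^sub>0" and "0 < n"
  shows "emeasure M {x \<in> \<Delta>\<^sub>0. \<phi> x = n \<and> U\<^sub>0 x \<in> E} * emeasure M \<Delta>\<^sub>0 \<le>
    ennreal (1 + c) * emeasure M E * emeasure M (level P r D (n - 1))"
proof -
  let ?Pn = "{p \<in> P. r p = n}"
  have "emeasure M {x \<in> \<Delta>\<^sub>0. \<phi> x = n \<and> U\<^sub>0 x \<in> E} * emeasure M \<Delta>\<^sub>0 =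
      (\<integral>\<^sup>+p. emeasure M (top_floor p \<inter> U -` E) * emeasure M \<Delta>\<^sub>0 \<partial>count_space ?Pn)"
    using emeasure_induced_vimage_split(2)[OF E(1), of "\<lambda>k. k = n"]
    by (simp add: nn_integral_multc)
  also have "\<dots> \<le> (\<integral>\<^sup>+p. ennreal (1 + c) * emeasure M E * emeasure M (top_floor p) \<partial>count_space ?Pn)"
    using emeasure_top_floor_vimage_le E by (intro nn_integral_mono) (auto simp: ac_simps)
  also have "\<dots> = ennreal (1 + c) * emeasure M E * emeasure M (\<Union>p\<in>?Pn. top_floor p)"
    using sets_top_floor disjoint_family_on_mono[OF _ disjoint_family_top_floor]
    by (subst emeasure_UN_countable) (auto simp: nn_integral_cmult)
  also have "\<dots> \<le> ennreal (1 + c) * emeasure M E * emeasure M (level P r D (n - 1))"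
    using \<open>0 < n\<close> sets_level
    by (intro mult_left_mono emeasure_mono) (auto simp: level_def top_floor_def)
  finally show ?thesis .
qed

lemma measure_return_time_le:
  assumes "E \<in> sets M" "E \<subseteq> \<Delta>\<^sub>0" "0 < n"
  shows "measure M {x \<in> \<Delta>\<^sub>0. \<phi> x = n \<and> U\<^sub>0 x \<in> E} * measure M \<Delta>\<^sub>0 \<le>
    (1 + c) * measure M E * measure M (level P r D (n - 1))"
proof -
  let ?S = "{x \<in> \<Delta>\<^sub>0. \<phi> x = n \<and> U\<^sub>0 x \<in> E}"
  have "ennreal (measure M ?S * measure M \<Delta>\<^sub>0) = emeasure M ?S * emeasure M \<Delta>\<^sub>0"
    by (simp add: emeasure_eq_measure ennreal_mult'')
  also have "\<dots> \<le> ennreal (1 + c) * emeasure M E * emeasure M (level P r D (n - 1))"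
    by (rule emeasure_return_time_le[OF assms])
  also have "\<dots> = ennreal ((1 + c) * measure M E * measure M (level P r D (n - 1)))"
    using c_nonneg by (simp add: emeasure_eq_measure ennreal_mult)
  finally show ?thesis
    using c_nonneg by (simp add: ennreal_le_iff)
qed

context
  fixes C0 \<rho> :: real
  assumes base_pos: "0 < measure M \<Delta>\<^sub>0" and rho_pos: "0 < \<rho>"
    and level_le: "\<And>n. measure M (level P r D n) \<le> C0 * \<rho> ^ n"
begin

lemma measure_return_time_le_power:
  assumes "E \<in> sets M" "E \<subseteq> \<Delta>\<^sub>0" "0 < n"
  shows "measure M {x \<in> \<Delta>\<^sub>0. \<phi> x = n \<and> U\<^sub>0 x \<in> E} \<le>
    (1 + c) * C0 / (\<rho> * measure M \<Delta>\<^sub>0) * \<rho> ^ n * measure M E"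
proof -
  obtain m where n: "n = Suc m" using \<open>0 < n\<close> gr0_implies_Suc by blast
  have "measure M {x \<in> \<Delta>\<^sub>0. \<phi> x = n \<and> U\<^sub>0 x \<in> E} * measure M \<Delta>\<^sub>0 \<le>
      (1 + c) * measure M E * measure M (level P r D m)"
    using measure_return_time_le[OF assms] n by simp
  also have "\<dots> \<le> (1 + c) * measure M E * (C0 * \<rho> ^ m)"
    using c_nonneg by (intro mult_left_mono level_le) auto
  also have "\<dots> = ((1 + c) * C0 / (\<rho> * measure M \<Delta>\<^sub>0) * \<rho> ^ n * measure M E) * measure M \<Delta>\<^sub>0"
    using rho_pos base_pos n by (simp add: field_simps)
  finally show ?thesis
    using base_pos by (rule mult_right_le_imp_le)
qed

lemma measure_return_cylinder_Suc_le:
  assumes "finite {i. Suc i \<in> F}" "0 \<in> F \<longrightarrow> 0 < ns 0"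
  shows "measure M (return_cylinder U \<Delta>\<^sub>0 F ns) \<le>
    (if 0 \<in> F then (1 + c) * C0 / (\<rho> * measure M \<Delta>\<^sub>0) * \<rho> ^ ns 0 else 1) *
    measure M (return_cylinder U \<Delta>\<^sub>0 {i. Suc i \<in> F} (\<lambda>i. ns (Suc i)))"
proof -
  let ?E = "return_cylinder U \<Delta>\<^sub>0 {i. Suc i \<in> F} (\<lambda>i. ns (Suc i))"
  have E: "?E \<in> sets M" "?E \<subseteq> \<Delta>\<^sub>0"
    using assms(1) by (rule sets_return_cylinder) (auto simp: return_cylinder_def)
  have cylinder_eq: "return_cylinder U \<Delta>\<^sub>0 F ns = {x \<in> \<Delta>\<^sub>0. (0 \<in> F \<longrightarrow> \<phi> x = ns 0) \<and> U\<^sub>0 x \<in> ?E}"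
    using induced_mem_base by (intro return_cylinder_unfold) blast
  show ?thesis
  proof (cases "0 \<in> F")
    case True
    then show ?thesis
      unfolding cylinder_eq using measure_return_time_le_power[OF E] assms(2) by simp
  next
    case False
    then show ?thesis
      unfolding cylinder_eq using emeasure_induced_vimage[OF E] by (simp add: measure_def)
  qed
qed

lemma measure_return_cylinder_le:
  assumes "finite F" "\<forall>i\<in>F. 0 < ns i"
  shows "measure M (return_cylinder U \<Delta>\<^sub>0 F ns) \<le> (\<Prod>i\<in>F. (1 + c) * C0 / (\<rho> * measure M \<Delta>\<^sub>0) * \<rho> ^ ns i)"
proof -
  define K where "K = (1 + c) * C0 / (\<rho> * measure M \<Delta>\<^sub>0)"
  have "0 < C0"
    using level_le[of 0] base_pos by (simp add: level_zero_eq_base)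
  then have "0 \<le> K"
    unfolding K_def using c_nonneg rho_pos base_pos by simp
  have "measure M (return_cylinder U \<Delta>\<^sub>0 F ns) \<le> (\<Prod>i\<in>F. K * \<rho> ^ ns i)"
    if "F \<subseteq> {..<m}" "\<forall>i\<in>F. 0 < ns i" for m
    using that
  proof (induction m arbitrary: F ns)
    case 0
    then show ?case by simp
  next
    case (Suc m)
    have "finite F"
      using Suc.prems(1) by (rule finite_subset) simp
    have "{i. Suc i \<in> F} \<subseteq> {..<m}"
      using Suc.prems(1) by auto
    then have "finite {i. Suc i \<in> F}"
      by (rule finite_subset) simp
    then have "measure M (return_cylinder U \<Delta>\<^sub>0 F ns) \<le> (if 0 \<in> F then K * \<rho> ^ ns 0 else 1) *
        measure M (return_cylinder U \<Delta>\<^sub>0 {i. Suc i \<in> F} (\<lambda>i. ns (Suc i)))"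
      unfolding K_def by (rule measure_return_cylinder_Suc_le) (use Suc.prems(2) in simp)
    also have "\<dots> \<le> (if 0 \<in> F then K * \<rho> ^ ns 0 else 1) * (\<Prod>i\<in>{i. Suc i \<in> F}. K * \<rho> ^ ns (Suc i))"
      using \<open>{i. Suc i \<in> F} \<subseteq> {..<m}\<close> Suc.prems(2) \<open>0 \<le> K\<close> rho_pos
      by (intro mult_left_mono Suc.IH) auto
    also have "\<dots> = (\<Prod>i\<in>F. K * \<rho> ^ ns i)"
      by (rule prod_split_zero[OF \<open>finite F\<close>, symmetric])
    finally show ?case .
  qed
  then show ?thesis
    using finite_nat_bounded[OF assms(1)] assms(2) unfolding K_def by blast
qed

end

end

lemma return_cylinder_measure_bound:
  assumes "0 < \<rho>" and level_le: "\<And>n. measure M (level P r D n) \<le> C0 * \<rho> ^ n"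
  shows "\<exists>C>0. \<forall>F ns. finite F \<longrightarrow> (\<forall>i\<in>F. 0 < ns i) \<longrightarrow>
    measure M (return_cylinder U \<Delta>\<^sub>0 F ns) \<le> (\<Prod>i\<in>F. C * \<rho> ^ ns i)"
proof -
  obtain c where c: "0 \<le> c"
    "\<forall>p\<in>P. \<forall>k<r p. \<forall>x\<in>D k p. \<forall>y\<in>D k p. J x \<le> (1 + c) * J y"
    by (rule bounded_distortion)
  show ?thesis
  proof (cases "measure M \<Delta>\<^sub>0 = 0")
    case True
    have "measure M (return_cylinder U \<Delta>\<^sub>0 F ns) \<le> (\<Prod>i\<in>F. 1 * \<rho> ^ ns i)" for F ns
    proof -
      have "measure M (return_cylinder U \<Delta>\<^sub>0 F ns) \<le> measure M \<Delta>\<^sub>0"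
        by (rule finite_measure_mono[OF _ sets_base]) (auto simp: return_cylinder_def)
      also have "\<dots> \<le> (\<Prod>i\<in>F. 1 * \<rho> ^ ns i)"
        using True \<open>0 < \<rho>\<close> by (simp add: prod_nonneg)
      finally show ?thesis .
    qed
    then show ?thesis by (intro exI[of _ 1]) auto
  next
    case False
    then have base_pos: "0 < measure M \<Delta>\<^sub>0"
      using measure_nonneg[of M "\<Delta>\<^sub>0"] by linarith
    then have "0 < C0"
      using level_le[of 0] level_zero_eq_base by simp
    then have "0 < (1 + c) * C0 / (\<rho> * measure M \<Delta>\<^sub>0)"
      using c(1) base_pos \<open>0 < \<rho>\<close> by simp
    then show ?thesis
      using measure_return_cylinder_le[OF c base_pos \<open>0 < \<rho>\<close> level_le] by blast
  qed
qed

end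

theorem lemmaA1:
  fixes M :: "'a measure" and U :: "'a \<Rightarrow> 'a" and P :: "nat set" and r :: "nat \<Rightarrow> nat"
    and D :: "nat \<Rightarrow> nat \<Rightarrow> 'a set" and J :: "'a \<Rightarrow> real" and C0 \<rho> :: real
  assumes "young_tower M U P r D J"
    and "0 < \<rho>" and "\<rho> < 1"
    and "\<And>n. measure M (level P r D n) \<le> C0 * \<rho> ^ n"
  shows "\<exists>C>0. \<forall>F :: nat set. \<forall>ns :: nat \<Rightarrow> nat. finite F \<longrightarrow> (\<forall>i\<in>F. 0 < ns i) \<longrightarrow>
           measure M {x \<in> base P D. \<forall>i\<in>F.
              ret_time U (base P D) ((induced U (base P D) ^^ i) x) = ns i}
           \<le> (\<Prod>i\<in>F. C * \<rho> ^ ns i)"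
  using young_tower_space.return_cylinder_measure_bound[OF young_tower_space.intro, OF assms(1,2,4)]
  unfolding return_cylinder_def .

end
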